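(* Let $G$ be a finite digraph which is a directed cycle, let $\varphi^L,\varphi^U:G\to[0,1]$ with $\varphi^L<\varphi^U$, and let $\varepsilon>0$. Then there exist a digraph $\tilde G$ which is a directed cycle, a surjective edge-preserving homomorphism $\Psi:\tilde G\to G$, and $\tilde\varphi^L,\tilde\varphi^U:\tilde G\to[0,1]$ such that: (a) if $\tilde g\in\tilde G$ and $\Psi(\tilde g)=g$, then $\varphi^L(g)\le\tilde\varphi^L(\tilde g)<\tilde\varphi^U(\tilde g)\le\varphi^U(g)$; (b) for every $g\in G$ there is $\tilde g\in\tilde G$ with $\Psi(\tilde g)=g$, $\tilde\varphi^L(\tilde g)=\varphi^L(g)$ and $\tilde\varphi^U(\tilde g)=\varphi^U(g)$; (c) for every $g\in G$ and all $a<b$ with $\varphi^L(g)\le a<b\le\varphi^U(g)$ there is $\tilde g\in\tilde G$ with $\Psi(\tilde g)=g$, $|a-\tilde\varphi^L(\tilde g)|<\varepsilon$ and $|b-\tilde\varphi^U(\tilde g)|<\varepsilon$; (d) whenever $\overrightarrow{\tilde g_1\tilde g_2}$ is an edge of $\tilde G$ with $\Psi(\tilde g_i)=g_i$, the increasing affine map $\alpha_1$ of $[\varphi^L(g_1),\varphi^U(g_1)]$ onto $[\varphi^L(g_2),\varphi^U(g_2)]$ and the increasing affine map $\alpha_2$ of $[\tilde\varphi^L(\tilde g_1),\tilde\varphi^U(\tilde g_1)]$ onto $[\tilde\varphi^L(\tilde g_2),\tilde\varphi^U(\tilde g_2)]$ are $\varepsilon$-close on their common domain, and $\alpha_1^{-1}$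 and $\alpha_2^{-1}$ are $\varepsilon$-close on their common domain. Moreover, there exists $m_0\in\mathbb{N}$ such that for every $m\ge m_0$ the digraph $\tilde G$ can be chosen with $|\tilde G|=m|G|$.
   Context: A digraph is a directed cycle if its vertices can be enumerated $c_1,\dots,c_k$ so that its edges are exactly $\overrightarrow{c_ic_{i+1}}$ ($1\le i<k$) and $\overrightarrow{c_kc_1}$. An edge-preserving homomorphism maps each edge $\overrightarrow{uv}$ to an edge $\overrightarrow{\Psi(u)\Psi(v)}$. *)

theory Defs
  imports Complex_Main
begin

definition is_directed_cycle :: "'a set \<Rightarrow> ('a \<times> 'a) set \<Rightarrow> bool" where
  "is_directed_cycle V E \<longleftrightarrow>
     (\<exists>(c :: nat \<Rightarrow> 'a) (k::nat). k \<ge> 1 \<and> bij_betw c {0..<k} V \<and>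
            E = {(c i, c ((i + 1) mod k)) | i. i < k})"

definition edge_hom :: "'b set \<Rightarrow> ('b \<times> 'b) set \<Rightarrow> 'a set \<Rightarrow> ('a \<times> 'a) set \<Rightarrow> ('b \<Rightarrow> 'a) \<Rightarrow> bool" where
  "edge_hom V1 E1 V2 E2 \<Psi> \<longleftrightarrow>
     (\<forall>v\<in>V1. \<Psi> v \<in> V2) \<and> (\<forall>(u,v)\<in>E1. (\<Psi> u, \<Psi> v) \<in> E2)"

definition aff_map :: "real \<Rightarrow> real \<Rightarrow> real \<Rightarrow> real \<Rightarrow> real \<Rightarrow> real" where
  "aff_map l1 u1 l2 u2 x = l2 + (x - l1) * (u2 - l2) / (u1 - l1)"

definition eps_close_on :: "real \<Rightarrow> real set \<Rightarrow> (real \<Rightarrow> real) \<Rightarrow> (real \<Rightarrow> real) \<Rightarrow> bool" where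
  "eps_close_on \<epsilon> D f g \<longleftrightarrow> (\<forall>x\<in>D. \<bar>f x - g x\<bar> < \<epsilon>)"

definition lemma8p2_props ::
  "'a set \<Rightarrow> ('a \<times> 'a) set \<Rightarrow> ('a \<Rightarrow> real) \<Rightarrow> ('a \<Rightarrow> real) \<Rightarrow> real \<Rightarrow>
   'b set \<Rightarrow> ('b \<times> 'b) set \<Rightarrow> ('b \<Rightarrow> 'a) \<Rightarrow> ('b \<Rightarrow> real) \<Rightarrow> ('b \<Rightarrow> real) \<Rightarrow> bool" where
  "lemma8p2_props V E L U \<epsilon> Vt Et \<Psi> Lt Ut \<longleftrightarrow>
     is_directed_cycle Vt Et \<and>
     edge_hom Vt Et V E \<Psi> \<and> \<Psi> ` Vt = V \<and>
     (\<forall>t\<in>Vt. Lt t \<in> {0..1} \<and> Ut t \<in> {0..1}) \<and>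
     \<comment> \<open>(a)\<close>
     (\<forall>t\<in>Vt. L (\<Psi> t) \<le> Lt t \<and> Lt t < Ut t \<and> Ut t \<le> U (\<Psi> t)) \<and>
     \<comment> \<open>(b)\<close>
     (\<forall>g\<in>V. \<exists>t\<in>Vt. \<Psi> t = g \<and> Lt t = L g \<and> Ut t = U g) \<and>
     \<comment> \<open>(c)\<close>
     (\<forall>g\<in>V. \<forall>a b. L g \<le> a \<and> a < b \<and> b \<le> U g \<longrightarrow>
        (\<exists>t\<in>Vt. \<Psi> t = g \<and> \<bar>a - Lt t\<bar> < \<epsilon> \<and> \<bar>b - Ut t\<bar> < \<epsilon>)) \<and>
     \<comment> \<open>(d)\<close>
     (\<forall>(t1,t2)\<in>Et.
        let g1 = \<Psi> t1; g2 = \<Psi> t2 in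
        eps_close_on \<epsilon> ({L g1..U g1} \<inter> {Lt t1..Ut t1})
          (aff_map (L g1) (U g1) (L g2) (U g2))
          (aff_map (Lt t1) (Ut t1) (Lt t2) (Ut t2)) \<and>
        eps_close_on \<epsilon> ({L g2..U g2} \<inter> {Lt t2..Ut t2})
          (aff_map (L g2) (U g2) (L g1) (U g1))
          (aff_map (Lt t2) (Ut t2) (Lt t1) (Ut t1)))"

end

theory Submission
  imports Defs
begin

(* Unroll the cycle c 0 -> ... -> c (k-1) -> c 0 of G into the cycle 0 -> 1 -> ... -> mk-1 -> 0,
   with t lying over c (t mod k), and let the j-th lap (t div k = j) give every vertex g the
   same relative window [P j, Q j] of [L g, U g], i.e. the subinterval from lerp (L g) (U g) (P j)
   to lerp (L g) (U g) (Q j).  Affine maps between intervals preserve relative coordinates, so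
   along an edge the two affine maps of (d) differ by at most the change of the window from one
   lap to the next.  Everything thus reduces to a closed walk of windows in [0,1] that starts
   at [0,1], moves by less than eps per lap and comes within eps of every pair 0 <= a < b <= 1:
   the windows [i/(n+1), 1 - r/(n+1)] with i + r <= n, traversed in boustrophedon order.
   Padding the walk with [0,1] makes every m > N admissible. *)

definition lerp :: "real \<Rightarrow> real \<Rightarrow> real \<Rightarrow> real" where
  "lerp l u s = l + s * (u - l)"

lemma lerp_0 [simp]: "lerp l u 0 = l"
  and lerp_1 [simp]: "lerp l u 1 = u"
  by (simp_all add: lerp_def)

lemma lerp_diff: "lerp l u s - lerp l u s' = (u - l) * (s - s')"
  by (simp add: lerp_def algebra_simps)

lemma lerp_less_lerp_iff: "l < u \<Longrightarrow> lerp l u s < lerp l u s' \<longleftrightarrow> s < s'"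
  by (simp add: lerp_def)

lemma lerp_le_lerp_iff: "l < u \<Longrightarrow> lerp l u s \<le> lerp l u s' \<longleftrightarrow> s \<le> s'"
  by (simp add: lerp_def)

lemma lerp_inverse: "l \<noteq> u \<Longrightarrow> lerp l u ((x - l) / (u - l)) = x"
  by (simp add: lerp_def)

lemma dist_lerp_le:
  assumes "l \<le> u" "u - l \<le> 1"
  shows "\<bar>lerp l u s - lerp l u s'\<bar> \<le> \<bar>s - s'\<bar>"
  unfolding lerp_diff abs_mult using assms by (simp add: mult_left_le_one_le)

lemma lerp_window:
  assumes "l < u" "0 \<le> p" "p < q" "q \<le> 1"
  shows "l \<le> lerp l u p \<and> lerp l u p < lerp l u q \<and> lerp l u q \<le> u"
  using assms lerp_le_lerp_iff[OF assms(1), of 0 p] lerp_less_lerp_iff[OF assms(1), of p q]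
    lerp_le_lerp_iff[OF assms(1), of q 1]
  by simp

lemma aff_map_lerp_lerp:
  assumes "l \<noteq> u" "p \<noteq> q"
  shows "aff_map (lerp l u p) (lerp l u q) (lerp l' u' p') (lerp l' u' q') (lerp l u s)
           = lerp l' u' (aff_map p q p' q' s)"
proof -
  have "(u - l) * (s - p) * ((u' - l') * (q' - p')) / ((u - l) * (q - p))
          = (u' - l') * ((s - p) * (q' - p') / (q - p))"
    using assms(1) by simp
  then show ?thesis
    unfolding aff_map_def lerp_diff by (simp add: lerp_def algebra_simps)
qed

lemma aff_map_lerp: "l \<noteq> u \<Longrightarrow> aff_map l u l' u' (lerp l u s) = lerp l' u' s"
  using aff_map_lerp_lerp[of l u 0 1 l' u' 0 1 s] by (simp add: aff_map_def)

lemma dist_aff_map_perturbed: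
  assumes "p \<le> s" "s \<le> q" "p < q" "\<bar>p' - p\<bar> \<le> h" "\<bar>q' - q\<bar> \<le> h"
  shows "\<bar>s - aff_map p q p' q' s\<bar> \<le> h"
proof -
  define t where "t = (s - p) / (q - p)"
  have t: "0 \<le> t" "t \<le> 1" using assms(1-3) by (simp_all add: t_def)
  have "s = p + t * (q - p)" "aff_map p q p' q' s = p' + t * (q' - p')"
    using assms(3) by (simp_all add: aff_map_def t_def)
  then have "s - aff_map p q p' q' s = (1 - t) * (p - p') + t * (q - q')"
    by (simp add: algebra_simps)
  also have "\<bar>\<dots>\<bar> \<le> (1 - t) * h + t * h"
    using t assms(4,5)
    by (intro abs_triangle_ineq[THEN order_trans] add_mono)
       (simp_all add: abs_mult abs_minus_commute mult_left_mono)
  finally show ?thesis by (simp add: algebra_simps)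
qed

lemma aff_map_lerp_close:
  assumes "l < u" "l' \<le> u'" "u' - l' \<le> 1" "p < q"
    and "\<bar>p' - p\<bar> \<le> h" "\<bar>q' - q\<bar> \<le> h" "h < \<epsilon>"
  shows "eps_close_on \<epsilon> ({l..u} \<inter> {lerp l u p..lerp l u q})
           (aff_map l u l' u')
           (aff_map (lerp l u p) (lerp l u q) (lerp l' u' p') (lerp l' u' q'))"
  unfolding eps_close_on_def
proof
  fix x assume x: "x \<in> {l..u} \<inter> {lerp l u p..lerp l u q}"
  define s where "s = (x - l) / (u - l)"
  have xs: "x = lerp l u s" using assms(1) by (simp add: s_def lerp_inverse)
  have s: "p \<le> s" "s \<le> q" using x assms(1) by (simp_all add: xs lerp_le_lerp_iff)
  have "\<bar>lerp l' u' s - lerp l' u' (aff_map p q p' q' s)\<bar> \<le> \<bar>s - aff_map p q p' q' s\<bar>"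
    using assms(2,3) by (rule dist_lerp_le)
  also have "\<dots> \<le> h" using s assms(4-6) by (rule dist_aff_map_perturbed)
  finally show "\<bar>aff_map l u l' u' x
      - aff_map (lerp l u p) (lerp l u q) (lerp l' u' p') (lerp l' u' q') x\<bar> < \<epsilon>"
    using assms(1,4,7) by (simp add: xs aff_map_lerp aff_map_lerp_lerp)
qed

definition tent :: "nat \<Rightarrow> nat \<Rightarrow> nat" where
  "tent d x = min x (d - x)"

lemma tent_Suc: "\<bar>int (tent d (Suc x)) - int (tent d x)\<bar> \<le> 1"
  unfolding tent_def by auto

lemma tent_Suc_mod:
  assumes "0 < d"
  shows "\<bar>int (tent d (Suc x mod d)) - int (tent d (x mod d))\<bar> \<le> 1"
proof (cases "Suc (x mod d) = d")
  case True
  then show ?thesis by (simp add: mod_Suc tent_def)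
next
  case False
  then show ?thesis using tent_Suc[of d "x mod d"] by (simp add: mod_Suc)
qed

(* For j = a * 2n + b < 4n^2 the left margin runs 0..n..0 with a and, for each a, the right
   margin runs 0..n..0 with b, capped at n minus the left margin.  Beyond 4n^2 both are 0; for
   the left margin this comes from the truncated subtraction in tent. *)
definition left_margin :: "nat \<Rightarrow> nat \<Rightarrow> nat" where
  "left_margin n j = tent (2 * n) (j div (2 * n))"

definition right_margin :: "nat \<Rightarrow> nat \<Rightarrow> nat" where
  "right_margin n j =
     (if j < 4 * n * n then min (tent (2 * n) (j mod (2 * n))) (n - left_margin n j) else 0)"

lemma left_margin_Suc:
  assumes "1 \<le> n"
  shows "\<bar>int (left_margin n (Suc j)) - int (left_margin n j)\<bar> \<le> 1"
  using assms tent_Suc[of "2 * n" "j div (2 * n)"]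
  by (auto simp: left_margin_def div_Suc)

lemma left_margin_le: "left_margin n j \<le> n"
  unfolding left_margin_def tent_def by auto

lemma margins_le: "left_margin n j + right_margin n j \<le> n"
  using left_margin_le[of n j] by (auto simp: right_margin_def)

lemma margins_0 [simp]: "left_margin n 0 = 0" "right_margin n 0 = 0"
  unfolding left_margin_def right_margin_def tent_def by auto

lemma margins_beyond:
  assumes "4 * n * n \<le> j"
  shows "left_margin n j = 0" "right_margin n j = 0"
proof -
  have "2 * n \<le> j div (2 * n)"
    using assms by (cases "n = 0") (simp_all add: less_eq_div_iff_mult_less_eq)
  then show "left_margin n j = 0" by (simp add: left_margin_def tent_def)
  show "right_margin n j = 0" using assms by (simp add: right_margin_def)
qed

lemma right_margin_Suc:
  assumes "1 \<le> n"
  shows "\<bar>int (right_margin n (Suc j)) - int (right_margin n j)\<bar> \<le> 1"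
proof -
  consider "Suc j < 4 * n * n" | "Suc j = 4 * n * n" | "4 * n * n < Suc j" by linarith
  then show ?thesis
  proof cases
    case 1
    have "\<bar>int (n - left_margin n (Suc j)) - int (n - left_margin n j)\<bar> \<le> 1"
      using left_margin_Suc[OF assms, of j] left_margin_le[of n] by (simp add: of_nat_diff)
    then show ?thesis
      using 1 tent_Suc_mod[of "2 * n" j] assms by (auto simp: right_margin_def min_def)
  next
    case 2
    then have "Suc j = (2 * n) * (2 * n)" by simp
    then have "Suc j mod (2 * n) = 0" by simp
    then have "j mod (2 * n) = 2 * n - 1"
      using assms by (auto simp: mod_Suc split: if_splits)
    then show ?thesis using 2 assms by (simp add: right_margin_def tent_def min_le_iff_disj)
  next
    case 3
    then show ?thesis by (simp add: right_margin_def)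
  qed
qed

lemma margins_visit:
  assumes "1 \<le> n" "i + r \<le> n"
  shows "i * (2 * n) + r < 4 * n * n"
    and "left_margin n (i * (2 * n) + r) = i"
    and "right_margin n (i * (2 * n) + r) = r"
proof -
  have "i * (2 * n) + r \<le> n * (2 * n) + n"
    using assms(2) by (intro add_mono mult_right_mono) simp_all
  also have "\<dots> < 4 * n * n" using assms(1) by (simp add: algebra_simps)
  finally show j: "i * (2 * n) + r < 4 * n * n" .
  have "r < 2 * n" using assms by simp
  then have "(i * (2 * n) + r) div (2 * n) = i" "(i * (2 * n) + r) mod (2 * n) = r" by simp_all
  then show "left_margin n (i * (2 * n) + r) = i" "right_margin n (i * (2 * n) + r) = r"
    using assms j by (simp_all add: left_margin_def right_margin_def tent_def)
qed

lemma dist_scaled_le: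
  assumes "\<bar>int a - int b\<bar> \<le> 1" "0 < r"
  shows "\<bar>real a / r - real b / r\<bar> \<le> 1 / r"
proof -
  have "\<bar>real a - real b\<bar> \<le> 1" using assms(1) by linarith
  then show ?thesis using assms(2) by (simp add: divide_right_mono flip: diff_divide_distrib)
qed

lemma nat_floor_approx:
  assumes "0 \<le> x" "0 < r"
  shows "\<bar>x - real (nat \<lfloor>x * r\<rfloor>) / r\<bar> < 1 / r"
proof -
  define a where "a = real (nat \<lfloor>x * r\<rfloor>)"
  have "a = of_int \<lfloor>x * r\<rfloor>" using assms by (simp add: a_def)
  then have "\<bar>x * r - a\<bar> < 1" by linarith
  moreover have "x - a / r = (x * r - a) / r" using assms(2) by (simp add: field_simps)
  ultimately show ?thesis
    using assms(2) by (simp add: a_def[symmetric] divide_strict_right_mono)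
qed

definition window_walk :: "real \<Rightarrow> nat \<Rightarrow> (nat \<Rightarrow> real) \<Rightarrow> (nat \<Rightarrow> real) \<Rightarrow> bool" where
  "window_walk h N P Q \<longleftrightarrow>
     (\<forall>j. 0 \<le> P j \<and> P j < Q j \<and> Q j \<le> 1) \<and>
     (\<forall>j. j = 0 \<or> N \<le> j \<longrightarrow> P j = 0 \<and> Q j = 1) \<and>
     (\<forall>j. \<bar>P (Suc j) - P j\<bar> \<le> h \<and> \<bar>Q (Suc j) - Q j\<bar> \<le> h) \<and>
     (\<forall>x y. 0 \<le> x \<and> x < y \<and> y \<le> 1 \<longrightarrow> (\<exists>j<N. \<bar>x - P j\<bar> < h \<and> \<bar>y - Q j\<bar> < h))"

lemma window_walk_margins:
  assumes "1 \<le> n"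
  shows "window_walk (1 / (real n + 1)) (4 * n * n)
           (\<lambda>j. left_margin n j / (real n + 1)) (\<lambda>j. 1 - right_margin n j / (real n + 1))"
  unfolding window_walk_def
proof (intro conjI allI impI)
  let ?d = "real n + 1"
  have d: "0 < ?d" by simp
  fix j
  have "real (left_margin n j) + real (right_margin n j) < ?d"
    using margins_le[of n j] by linarith
  then have "(left_margin n j + right_margin n j) / ?d < 1" by simp
  then show "left_margin n j / ?d < 1 - right_margin n j / ?d"
    by (simp add: add_divide_distrib)
  show "0 \<le> left_margin n j / ?d" "1 - right_margin n j / ?d \<le> 1" by simp_all
  show "\<bar>left_margin n (Suc j) / ?d - left_margin n j / ?d\<bar> \<le> 1 / ?d"
    using left_margin_Suc[OF assms] d by (rule dist_scaled_le)
  show "\<bar>(1 - right_margin n (Suc j) / ?d) - (1 - right_margin n j / ?d)\<bar> \<le> 1 / ?d"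
    using dist_scaled_le[OF right_margin_Suc[OF assms] d, of j] by (simp add: abs_minus_commute)
next
  fix j :: nat
  assume "j = 0 \<or> 4 * n * n \<le> j"
  then show "left_margin n j / (real n + 1) = 0" "1 - right_margin n j / (real n + 1) = 1"
    using margins_beyond[of n j] by auto
next
  fix x y :: real
  assume xy: "0 \<le> x \<and> x < y \<and> y \<le> 1"
  define i where "i = nat \<lfloor>x * (real n + 1)\<rfloor>"
  define r where "r = nat \<lfloor>(1 - y) * (real n + 1)\<rfloor>"
  have "(x - y) * (real n + 1) < 0" using xy by (intro mult_neg_pos) simp_all
  then have "x * (real n + 1) + (1 - y) * (real n + 1) < real n + 1"
    by (simp add: algebra_simps)
  moreover have "real i \<le> x * (real n + 1)" "real r \<le> (1 - y) * (real n + 1)"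
    using xy by (simp_all add: i_def r_def)
  ultimately have "real i + real r < real n + 1" by linarith
  then have "i + r \<le> n" by linarith
  have "i * (2 * n) + r < 4 * n * n" "left_margin n (i * (2 * n) + r) = i"
    "right_margin n (i * (2 * n) + r) = r"
    using margins_visit[OF assms \<open>i + r \<le> n\<close>] by simp_all
  moreover have "\<bar>x - i / (real n + 1)\<bar> < 1 / (real n + 1)"
    using xy unfolding i_def by (intro nat_floor_approx) simp_all
  moreover have "\<bar>(1 - y) - r / (real n + 1)\<bar> < 1 / (real n + 1)"
    using xy unfolding r_def by (intro nat_floor_approx) simp_all
  ultimately show "\<exists>j<4 * n * n. \<bar>x - left_margin n j / (real n + 1)\<bar> < 1 / (real n + 1)
                    \<and> \<bar>y - (1 - right_margin n j / (real n + 1))\<bar> < 1 / (real n + 1)"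
    by (intro exI[of _ "i * (2 * n) + r"]) (simp add: abs_minus_commute)
qed

lemma window_walk_mono:
  assumes "window_walk h N P Q" "h \<le> h'"
  shows "window_walk h' N P Q"
proof -
  have "\<bar>x - P j\<bar> < h \<and> \<bar>y - Q j\<bar> < h \<Longrightarrow> \<bar>x - P j\<bar> < h' \<and> \<bar>y - Q j\<bar> < h'" for x y j
    using assms(2) by linarith
  then show ?thesis
    using assms unfolding window_walk_def by (meson order_trans)
qed

lemma window_walk_exists:
  assumes "0 < h"
  shows "\<exists>N P Q. window_walk h N P Q"
proof -
  obtain n where n: "inverse (real (Suc n)) < h"
    using reals_Archimedean[OF assms] by blast
  have "1 / (real (Suc n) + 1) \<le> inverse (real (Suc n))"
    by (simp add: inverse_eq_divide frac_le)
  with n have "window_walk h (4 * Suc n * Suc n) (\<lambda>j. left_margin (Suc n) j / (real (Suc n) + 1))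
      (\<lambda>j. 1 - right_margin (Suc n) j / (real (Suc n) + 1))"
    by (intro window_walk_mono[OF window_walk_margins]) simp_all
  then show ?thesis by blast
qed

lemma window_walk_approx:
  assumes "window_walk h N P Q" "l < u" "u - l \<le> 1" "l \<le> a" "a < b" "b \<le> u"
  shows "\<exists>j<N. \<bar>a - lerp l u (P j)\<bar> < h \<and> \<bar>b - lerp l u (Q j)\<bar> < h"
proof -
  define x where "x = (a - l) / (u - l)"
  define y where "y = (b - l) / (u - l)"
  have ab: "a = lerp l u x" "b = lerp l u y"
    using assms(2) by (simp_all add: x_def y_def lerp_inverse)
  have "lerp l u 0 \<le> lerp l u x" "lerp l u x < lerp l u y" "lerp l u y \<le> lerp l u 1"
    using assms(4-6) by (simp_all flip: ab)
  then have "0 \<le> x \<and> x < y \<and> y \<le> 1"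
    using assms(2) by (simp add: lerp_le_lerp_iff lerp_less_lerp_iff del: lerp_0 lerp_1)
  then obtain j where j: "j < N" "\<bar>x - P j\<bar> < h" "\<bar>y - Q j\<bar> < h"
    using assms(1) unfolding window_walk_def by blast
  have "\<bar>a - lerp l u (P j)\<bar> \<le> \<bar>x - P j\<bar>" "\<bar>b - lerp l u (Q j)\<bar> \<le> \<bar>y - Q j\<bar>"
    unfolding ab using assms(2,3) by (simp_all add: dist_lerp_le)
  with j(2,3) have "\<bar>a - lerp l u (P j)\<bar> < h" "\<bar>b - lerp l u (Q j)\<bar> < h" by simp_all
  with j(1) show ?thesis by blast
qed

lemma is_directed_cycle_Suc_mod:
  fixes M :: nat
  assumes "1 \<le> M"
  shows "is_directed_cycle {0..<M} {(t, Suc t mod M) | t. t < M}"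
  unfolding is_directed_cycle_def using assms by (intro exI[of _ id] exI[of _ M]) auto

lemma edge_hom_mod:
  fixes k :: nat
  assumes "0 < k" "c ` {0..<k} \<subseteq> V"
  shows "edge_hom {0..<m * k} {(t, Suc t mod (m * k)) | t. t < m * k}
           V {(c i, c ((i + 1) mod k)) | i. i < k} (\<lambda>t. c (t mod k))"
  unfolding edge_hom_def
proof (intro conjI ballI)
  show "c (t mod k) \<in> V" for t using assms by auto
  fix e assume "e \<in> {(t, Suc t mod (m * k)) | t. t < m * k}"
  then obtain t where t: "e = (t, Suc t mod (m * k))" by blast
  have "Suc t mod (m * k) mod k = (t mod k + 1) mod k"
    by (simp add: mod_mod_cancel mod_Suc_eq)
  then show "case e of (u, v) \<Rightarrow> (c (u mod k), c (v mod k)) \<in> {(c i, c ((i + 1) mod k)) | i. i < k}"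
    using assms(1) t by auto
qed

lemma image_mod:
  fixes k :: nat
  assumes "0 < k" "1 \<le> m"
  shows "(\<lambda>t. c (t mod k)) ` {0..<m * k} = c ` {0..<k}"
proof
  show "(\<lambda>t. c (t mod k)) ` {0..<m * k} \<subseteq> c ` {0..<k}" using assms(1) by auto
  show "c ` {0..<k} \<subseteq> (\<lambda>t. c (t mod k)) ` {0..<m * k}"
  proof
    fix g assume "g \<in> c ` {0..<k}"
    then obtain i where i: "i < k" "g = c i" by auto
    moreover have "i < m * k" using i(1) assms(2) by (metis less_le_trans mult_1 mult_le_mono1)
    ultimately show "g \<in> (\<lambda>t. c (t mod k)) ` {0..<m * k}" by force
  qed
qed

lemma Suc_mod_mult_div_cases:
  fixes k :: nat
  assumes "t < m * k"
  obtains "Suc t mod (m * k) div k = t div k"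
    | "Suc t mod (m * k) div k = Suc (t div k)"
    | "Suc t mod (m * k) div k = 0" "t div k = m - 1"
proof (cases "Suc t < m * k")
  case True
  then show ?thesis using that(1,2) by (cases "Suc t mod k = 0") (simp_all add: div_Suc)
next
  case False
  with assms have t: "Suc t = m * k" by simp
  then have "0 < k" by (metis mult_0_right zero_less_Suc gr0I)
  have "t div k < m" using assms \<open>0 < k\<close> by (simp add: div_less_iff_less_mult)
  moreover have "(m - 1) * k \<le> t"
    using t \<open>0 < k\<close> by (simp add: diff_mult_distrib)
  then have "m - 1 \<le> t div k" using \<open>0 < k\<close> by (simp add: less_eq_div_iff_mult_less_eq)
  ultimately show ?thesis using that(3) t by simp
qed

lemma window_walk_Suc_mod_div:
  fixes k :: nat
  assumes "window_walk h N P Q" "N < m" "t < m * k"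
  shows "\<bar>P (Suc t mod (m * k) div k) - P (t div k)\<bar> \<le> h
    \<and> \<bar>Q (Suc t mod (m * k) div k) - Q (t div k)\<bar> \<le> h"
proof -
  have steps: "\<bar>P (Suc j) - P j\<bar> \<le> h \<and> \<bar>Q (Suc j) - Q j\<bar> \<le> h" for j
    using assms(1) by (simp add: window_walk_def)
  have rest: "P j = 0 \<and> Q j = 1" if "j = 0 \<or> N \<le> j" for j
    using assms(1) that unfolding window_walk_def by blast
  have "0 \<le> h" using steps[of 0] by linarith
  from assms(3) show ?thesis
  proof (cases rule: Suc_mod_mult_div_cases)
    case 3
    then have "N \<le> t div k" using assms(2) by simp
    then show ?thesis using 3 rest[of 0] rest[of "t div k"] \<open>0 \<le> h\<close> by simp
  qed (use steps \<open>0 \<le> h\<close> in simp_all)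
qed

locale unrolled_cycle =
  fixes c :: "nat \<Rightarrow> 'a" and k :: nat and V :: "'a set" and L U :: "'a \<Rightarrow> real"
    and h \<epsilon> :: real and N :: nat and P Q :: "nat \<Rightarrow> real" and m :: nat
  assumes enum: "bij_betw c {0..<k} V" and k_pos: "0 < k"
    and unit: "\<forall>g\<in>V. L g \<in> {0..1} \<and> U g \<in> {0..1}" and less: "\<forall>g\<in>V. L g < U g"
    and walk: "window_walk h N P Q" and h_less: "h < \<epsilon>" and N_less: "N < m"
begin

abbreviation cover_map :: "nat \<Rightarrow> 'a" where
  "cover_map t \<equiv> c (t mod k)"

abbreviation cover_lo :: "nat \<Rightarrow> real" where
  "cover_lo t \<equiv> lerp (L (cover_map t)) (U (cover_map t)) (P (t div k))"

abbreviation cover_hi :: "nat \<Rightarrow> real" where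
  "cover_hi t \<equiv> lerp (L (cover_map t)) (U (cover_map t)) (Q (t div k))"

lemma V_eq: "V = c ` {0..<k}"
  using enum by (simp add: bij_betw_def)

lemma cover_map_in: "cover_map t \<in> V"
  using k_pos by (simp add: V_eq)

lemma vertex_interval: "g \<in> V \<Longrightarrow> L g < U g \<and> 0 \<le> L g \<and> U g \<le> 1"
  using unit less by auto

lemma window_bounds: "0 \<le> P j \<and> P j < Q j \<and> Q j \<le> 1"
  using walk by (simp add: window_walk_def)

lemma cover_window:
  "L (cover_map t) \<le> cover_lo t \<and> cover_lo t < cover_hi t \<and> cover_hi t \<le> U (cover_map t)"
  using lerp_window vertex_interval[OF cover_map_in] window_bounds by blast

lemma cover_unit: "cover_lo t \<in> {0..1} \<and> cover_hi t \<in> {0..1}"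
  using cover_window[of t] vertex_interval[OF cover_map_in, of t] by auto

lemma cover_first_lap:
  assumes "g \<in> V"
  shows "\<exists>t\<in>{0..<m * k}. cover_map t = g \<and> cover_lo t = L g \<and> cover_hi t = U g"
proof -
  obtain i where i: "i < k" "g = c i" using assms V_eq by auto
  moreover have "1 * k \<le> m * k" using N_less by (intro mult_le_mono1) simp
  then have "i < m * k" using i(1) by linarith
  moreover have "P 0 = 0" "Q 0 = 1" using walk by (simp_all add: window_walk_def)
  ultimately show ?thesis by (intro bexI[of _ i]) simp_all
qed

lemma cover_approx:
  assumes "g \<in> V" "L g \<le> a" "a < b" "b \<le> U g"
  shows "\<exists>t\<in>{0..<m * k}. cover_map t = g \<and> \<bar>a - cover_lo t\<bar> < \<epsilon> \<and> \<bar>b - cover_hi t\<bar> < \<epsilon>"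
proof -
  obtain i where i: "i < k" "g = c i" using assms(1) V_eq by auto
  have "L g < U g" "U g - L g \<le> 1" using vertex_interval[OF assms(1)] by simp_all
  then obtain j where j: "j < N"
      "\<bar>a - lerp (L g) (U g) (P j)\<bar> < h" "\<bar>b - lerp (L g) (U g) (Q j)\<bar> < h"
    using window_walk_approx[OF walk _ _ assms(2-4)] by blast
  have "j * k + i < Suc j * k" using i(1) by simp
  also have "\<dots> \<le> m * k" using j(1) N_less by (intro mult_le_mono1) simp
  finally have "j * k + i < m * k" .
  moreover have "(j * k + i) mod k = i" "(j * k + i) div k = j" using i(1) by simp_all
  ultimately show ?thesis
    using i(2) j(2,3) h_less by (intro bexI[of _ "j * k + i"]) simp_all
qed

lemma cover_edge_close:
  assumes "t < m * k" "t' = Suc t mod (m * k)"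
  shows "eps_close_on \<epsilon> ({L (cover_map t)..U (cover_map t)} \<inter> {cover_lo t..cover_hi t})
           (aff_map (L (cover_map t)) (U (cover_map t)) (L (cover_map t')) (U (cover_map t')))
           (aff_map (cover_lo t) (cover_hi t) (cover_lo t') (cover_hi t'))
       \<and> eps_close_on \<epsilon> ({L (cover_map t')..U (cover_map t')} \<inter> {cover_lo t'..cover_hi t'})
           (aff_map (L (cover_map t')) (U (cover_map t')) (L (cover_map t)) (U (cover_map t)))
           (aff_map (cover_lo t') (cover_hi t') (cover_lo t) (cover_hi t))"
proof -
  have "\<bar>P (t' div k) - P (t div k)\<bar> \<le> h" "\<bar>Q (t' div k) - Q (t div k)\<bar> \<le> h"
    using window_walk_Suc_mod_div[OF walk N_less assms(1)] assms(2) by simp_all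
  then show ?thesis
    using vertex_interval[OF cover_map_in, of t] vertex_interval[OF cover_map_in, of t']
      window_bounds[of "t div k"] window_bounds[of "t' div k"] h_less
    by (intro conjI aff_map_lerp_close) (simp_all add: abs_minus_commute)
qed

lemma lemma8p2_props_cover:
  "lemma8p2_props V {(c i, c ((i + 1) mod k)) | i. i < k} L U \<epsilon>
     {0..<m * k} {(t, Suc t mod (m * k)) | t. t < m * k} cover_map cover_lo cover_hi"
proof -
  have m: "1 \<le> m" using N_less by simp
  then have "1 \<le> m * k" using k_pos by simp
  then show ?thesis
    unfolding lemma8p2_props_def Let_def
    using is_directed_cycle_Suc_mod edge_hom_mod[OF k_pos, of c V m] image_mod[OF k_pos m, of c]
      V_eq cover_map_in cover_unit cover_window cover_first_lap cover_approx cover_edge_close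
    by auto
qed

end

theorem lemma8p2:
  fixes V :: "'a set" and E :: "('a \<times> 'a) set"
    and L U :: "'a \<Rightarrow> real" and \<epsilon> :: real
  assumes "finite V" and "is_directed_cycle V E"
    and "\<forall>g\<in>V. L g \<in> {0..1} \<and> U g \<in> {0..1}"
    and "\<forall>g\<in>V. L g < U g"
    and "\<epsilon> > 0"
  shows "\<exists>m0::nat. \<forall>m\<ge>m0. \<exists>(Vt :: nat set) Et \<Psi> Lt Ut.
           lemma8p2_props V E L U \<epsilon> Vt Et \<Psi> Lt Ut \<and> card Vt = m * card V"
proof -
  obtain c :: "nat \<Rightarrow> 'a" and k where k: "1 \<le> k" and c: "bij_betw c {0..<k} V"
    and E: "E = {(c i, c ((i + 1) mod k)) | i. i < k}"
    using assms(2) unfolding is_directed_cycle_def by blast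
  obtain N P Q where walk: "window_walk (\<epsilon> / 2) N P Q"
    using window_walk_exists assms(5) by (metis half_gt_zero)
  have "card V = k" using bij_betw_same_card[OF c] by simp
  show ?thesis
  proof (intro exI[of _ "Suc N"] allI impI)
    fix m assume "Suc N \<le> m"
    then interpret unrolled_cycle c k V L U "\<epsilon> / 2" \<epsilon> N P Q m
      using c k walk assms(3-5) by unfold_locales simp_all
    note lemma8p2_props_cover
    moreover have "card {0..<m * k} = m * card V" using \<open>card V = k\<close> by simp
    ultimately show "\<exists>(Vt :: nat set) Et \<Psi> Lt Ut.
        lemma8p2_props V E L U \<epsilon> Vt Et \<Psi> Lt Ut \<and> card Vt = m * card V"
      unfolding E by blast
  qed
qed

end
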